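(* Let $S\subseteq\mathbb{R}^n\times\mathbb{R}^m$ be convex, let (MOCP) be bounded and fix $p\in[1,\infty]$. If $\bar S\subseteq S$ is a Hausdorff-type finite $\epsilon$-solution of (MOCP), then $\bar S$ is a finite $(\|Q\|\epsilon)$-solution of (CP), where $\|Q\|=(m^{p-1}+1)^{1/p}$ (equal to $m$ for $p=\infty$).
   Context: $\|\cdot\|$ is the $p$-norm, $B_\epsilon$ its closed $\epsilon$-ball. (CP): compute $Y=\{y:\exists x,(x,y)\in S\}$; for bounded (CP) a nonempty finite $\bar S\subseteq S$ is a finite $\epsilon$-solution if $Y\subseteq\operatorname{conv}\operatorname{proj}_y[\bar S]+B_\epsilon$. $P(x,y)=(y,-\mathbf{1}^\top y)$, $Qy=(y,-\mathbf{1}^\top y)$, $\mathbf{1}\in\mathbb{R}^m$ all-ones; $\|Q\|$ is the operator norm induced by the $p$-norms. (MOCP): minimize $P(x,y)$ w.r.t. $\le_{\mathbb{R}^{m+1}_+}$ over $(x,y)\in S$, upper image $\mathcal{P}=\operatorname{cl}(P[S]+\mathbb{R}^{m+1}_+)$; bounded means $\mathcal{P}\subseteq\{q\}+\mathbb{R}^{m+1}_+$ for some $q$. Hausdorff distance $d_H(A_1,A_2)=\max\{\sup_{a_1\in A_1}\inf_{a_2\in A_2}\|a_1-a_2\|,\sup_{a_2\in A_2}\inf_{a_1\in A_1}\|a_1-a_2\|\}$. A nonempty finite $\bar S\subseteq S$ is a Hausdorff-type finite $\epsilon$-solution of (MOCP) if $d_H(\mathcal{P},\operatorname{conv}P[\bar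 S]+\mathbb{R}^{m+1}_+)\le\epsilon$. *)

theory Defs
  imports "HOL-Analysis.Analysis"
begin

definition pnorm :: "ereal \<Rightarrow> real^'k \<Rightarrow> real" where
  "pnorm p x = (if p = \<infinity> then Max (range (\<lambda>i. \<bar>x $ i\<bar>))
                else (\<Sum>i\<in>UNIV. \<bar>x $ i\<bar> powr real_of_ereal p) powr (1 / real_of_ereal p))"

text \<open>Objective maps. R^(m+1) is modelled as real^('m option); the index None is the extra
  coordinate carrying -1^T y.\<close>
definition Qmap :: "real^'m \<Rightarrow> real^('m option)" where
  "Qmap y = (\<chi> i. case i of Some j \<Rightarrow> y $ j | None \<Rightarrow> - (\<Sum>j\<in>UNIV. y $ j))"

definition Pmap :: "(real^'n) \<times> (real^'m) \<Rightarrow> real^('m option)" where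
  "Pmap xy = Qmap (snd xy)"

definition Qnorm :: "ereal \<Rightarrow> ('m::finite) itself \<Rightarrow> real" where
  "Qnorm p (_ :: ('m::finite) itself) =
     (SUP y \<in> {y :: real^'m. y \<noteq> 0}. pnorm p (Qmap y) / pnorm p y)"

definition Yset :: "((real^'n) \<times> (real^'m)) set \<Rightarrow> (real^'m) set" where
  "Yset S = {y. \<exists>x. (x, y) \<in> S}"

definition finite_eps_sol_CP ::
  "ereal \<Rightarrow> ((real^'n) \<times> (real^'m)) set \<Rightarrow> real \<Rightarrow> ((real^'n) \<times> (real^'m)) set \<Rightarrow> bool" where
  "finite_eps_sol_CP p S \<epsilon> Sb \<longleftrightarrow> finite Sb \<and> Sb \<noteq> {} \<and> Sb \<subseteq> S \<and>
     (\<forall>y \<in> Yset S. \<exists>z \<in> convex hull (snd ` Sb). pnorm p (y - z) \<le> \<epsilon>)"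

definition upper_image :: "((real^'n) \<times> (real^'m)) set \<Rightarrow> (real^('m option)) set" where
  "upper_image S = closure {u. \<exists>s \<in> S. \<forall>i. Pmap s $ i \<le> u $ i}"

definition MOCP_bounded :: "((real^'n) \<times> (real^'m)) set \<Rightarrow> bool" where
  "MOCP_bounded S \<longleftrightarrow> (\<exists>q. upper_image S \<subseteq> {u. \<forall>i. q $ i \<le> u $ i})"

definition hausdorff_p :: "ereal \<Rightarrow> (real^'k) set \<Rightarrow> (real^'k) set \<Rightarrow> ereal" where
  "hausdorff_p p A B = max (SUP a\<in>A. INF b\<in>B. ereal (pnorm p (a - b)))
                           (SUP b\<in>B. INF a\<in>A. ereal (pnorm p (a - b)))"

definition hausdorff_eps_sol_MOCP ::
  "ereal \<Rightarrow> ((real^'n) \<times> (real^'m)) set \<Rightarrow> real \<Rightarrow> ((real^'n) \<times> (real^'m)) set \<Rightarrow> bool" where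
  "hausdorff_eps_sol_MOCP p S \<epsilon> Sb \<longleftrightarrow> finite Sb \<and> Sb \<noteq> {} \<and> Sb \<subseteq> S \<and>
     hausdorff_p p (upper_image S)
       {u. \<exists>v \<in> convex hull (Pmap ` Sb). \<forall>i. v $ i \<le> u $ i} \<le> ereal \<epsilon>"

end

theory Submission
  imports Defs
begin

text \<open>For \<open>y \<in> Y\<close> the point \<open>Q y\<close> lies in the upper image, hence within \<open>\<epsilon> + \<delta>\<close> of
  some \<open>b \<ge> Q z\<close> with \<open>z\<close> in the convex hull of \<open>proj\<^sub>y S\<close>. Then \<open>w = Q y - b\<close> satisfies
  \<open>w \<le> Q (y - z)\<close>, and any \<open>w \<le> Q u\<close> forces \<open>\<parallel>u\<parallel> \<le> \<parallel>Q\<parallel> \<parallel>w\<parallel>\<close>: the slack \<open>d = Q u - w \<ge> 0\<close> has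
  total mass \<open>T = -\<Sum> w\<close> because the components of \<open>Q u\<close> sum to zero, so each \<open>u\<^sub>j = w\<^sub>j + d\<^sub>j\<close>
  is a convex combination of \<open>w\<^sub>j\<close> and \<open>-\<Sum>\<^sub>i\<^sub>\<noteq>\<^sub>j w\<^sub>i\<close> with weights summing to at most one,
  and convexity of \<open>|\<cdot>|\<^sup>p\<close> plus the power mean inequality give the bound. The all-ones vector
  shows that this constant is exactly \<open>\<parallel>Q\<parallel>\<close>, and compactness of the hull removes \<open>\<delta>\<close>.\<close>

lemma convex_on_abs_powr:
  fixes p :: real
  assumes p: "p \<ge> 1"
  shows "convex_on UNIV (\<lambda>x::real. \<bar>x\<bar> powr p)"
proof (rule convex_onI)
  fix t x y :: real
  assume t: "0 < t" "t < 1"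
  define a where "a = \<bar>x\<bar>"
  define b where "b = \<bar>y\<bar>"
  have ab: "a \<ge> 0" "b \<ge> 0" by (auto simp: a_def b_def)
  have "\<bar>(1 - t) * x + t * y\<bar> \<le> (1 - t) * a + t * b"
    using abs_triangle_ineq[of "(1 - t) * x" "t * y"] t by (simp add: a_def b_def abs_mult)
  then have "\<bar>(1 - t) * x + t * y\<bar> powr p \<le> ((1 - t) * a + t * b) powr p"
    using p by (intro powr_mono2) auto
  also have "\<dots> \<le> (1 - t) * a powr p + t * b powr p"
  proof (cases "a > 0 \<and> b > 0")
    case True
    then show ?thesis using convex_onD[OF powr_convex[OF p], of t a b] t by auto
  next
    case False
    \<comment> \<open>on the boundary \<open>powr_convex\<close> does not apply; use \<open>s powr p \<le> s\<close> for \<open>s \<in> [0,1]\<close>\<close>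
    have tp: "t powr p \<le> t" "(1 - t) powr p \<le> 1 - t"
      using powr_mono'[of 1 p t] powr_mono'[of 1 p "1 - t"] t p by auto
    consider "a = 0" | "b = 0" using False ab by linarith
    then show ?thesis
    proof cases
      case 1
      then have "((1 - t) * a + t * b) powr p = t powr p * b powr p" using t ab by (simp add: powr_mult)
      also have "\<dots> \<le> t * b powr p" using tp by (intro mult_right_mono) auto
      finally show ?thesis using 1 p by simp
    next
      case 2
      then have "((1 - t) * a + t * b) powr p = (1 - t) powr p * a powr p" using t ab by (simp add: powr_mult)
      also have "\<dots> \<le> (1 - t) * a powr p" using tp by (intro mult_right_mono) auto
      finally show ?thesis using 2 p by simp
    qed
  qed
  finally show "\<bar>(1 - t) *\<^sub>R x + t *\<^sub>R y\<bar> powr p \<le> (1 - t) * \<bar>x\<bar> powr p + t * \<bar>y\<bar> powr p"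
    by (simp add: a_def b_def)
qed simp

lemma abs_sum_powr_le:
  fixes f :: "'a \<Rightarrow> real" and p :: real
  assumes p: "p \<ge> 1" and A: "finite A" "A \<noteq> {}"
  shows "\<bar>\<Sum>i\<in>A. f i\<bar> powr p \<le> real (card A) powr (p - 1) * (\<Sum>i\<in>A. \<bar>f i\<bar> powr p)"
proof -
  define n where "n = real (card A)"
  have n: "n > 0" using A by (simp add: n_def card_gt_0_iff)
  have "\<bar>\<Sum>i\<in>A. (1 / n) *\<^sub>R f i\<bar> powr p \<le> (\<Sum>i\<in>A. (1 / n) * \<bar>f i\<bar> powr p)"
    by (rule convex_on_sum[OF A convex_on_abs_powr[OF p]]) (use n in \<open>auto simp: n_def\<close>)
  then have "\<bar>\<Sum>i\<in>A. f i\<bar> powr p / n powr p \<le> (\<Sum>i\<in>A. \<bar>f i\<bar> powr p) / n"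
    using n by (simp add: sum_distrib_left[symmetric] abs_mult sum_divide_distrib[symmetric] powr_divide)
  then have "\<bar>\<Sum>i\<in>A. f i\<bar> powr p \<le> (n powr p / n) * (\<Sum>i\<in>A. \<bar>f i\<bar> powr p)"
    using n by (simp add: pos_divide_le_eq mult.commute)
  also have "n powr p / n = n powr (p - 1)" using n by (simp add: powr_diff)
  finally show ?thesis by (simp add: n_def)
qed

lemma abs_add_powr_le_chord:
  fixes r a d T :: real
  assumes r: "r \<ge> 1" and d: "0 \<le> d" "d \<le> T"
  shows "\<bar>a + d\<bar> powr r \<le> \<bar>a\<bar> powr r + d / T * (\<bar>a + T\<bar> powr r - \<bar>a\<bar> powr r)"
proof (cases "T = 0")
  case True
  then show ?thesis using d by simp
next
  case False
  define l where "l = d / T"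
  have l: "0 \<le> l" "l \<le> 1" using d False by (auto simp: l_def)
  have e: "a + d = (1 - l) *\<^sub>R a + l *\<^sub>R (a + T)" using False by (simp add: l_def field_simps)
  have "\<bar>(1 - l) *\<^sub>R a + l *\<^sub>R (a + T)\<bar> powr r \<le> (1 - l) * \<bar>a\<bar> powr r + l * \<bar>a + T\<bar> powr r"
    using convex_onD[OF convex_on_abs_powr[OF r] l] by simp
  then show ?thesis unfolding e by (simp add: l_def algebra_simps)
qed

lemma ereal_ge1_cases:
  assumes "1 \<le> p"
  obtains "p = \<infinity>" | r where "p = ereal r" "r \<ge> 1"
  using assms by (cases p) auto

lemma pnorm_ereal: "pnorm (ereal r) x = (\<Sum>i\<in>UNIV. \<bar>x $ i\<bar> powr r) powr (1 / r)"
  by (simp add: pnorm_def)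

lemma pnorm_infinity_le_iff: "pnorm \<infinity> x \<le> c \<longleftrightarrow> (\<forall>i. \<bar>x $ i\<bar> \<le> c)"
  by (simp add: pnorm_def)

lemma abs_component_le_pnorm_infinity: "\<bar>x $ i\<bar> \<le> pnorm \<infinity> x"
  by (simp add: pnorm_def)

lemma pnorm_pos:
  assumes p: "1 \<le> p" and x: "x \<noteq> 0"
  shows "pnorm p x > 0"
proof -
  obtain j where j: "x $ j \<noteq> 0" using x by (auto simp: vec_eq_iff)
  from p show ?thesis
  proof (cases rule: ereal_ge1_cases)
    case 1
    then show ?thesis using abs_component_le_pnorm_infinity[of x j] j by simp
  next
    case (2 r)
    have "0 < \<bar>x $ j\<bar> powr r" using j by simp
    also have "\<dots> \<le> (\<Sum>i\<in>UNIV. \<bar>x $ i\<bar> powr r)" by (rule member_le_sum) auto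
    finally show ?thesis using 2 by (simp add: pnorm_ereal)
  qed
qed

lemma continuous_on_pnorm:
  assumes p: "1 \<le> p"
  shows "continuous_on UNIV (pnorm p :: real^'k \<Rightarrow> real)"
  using p
proof (cases rule: ereal_ge1_cases)
  case 1
  have le: "pnorm \<infinity> a \<le> pnorm \<infinity> b + dist a b" for a b :: "real^'k"
  proof -
    have "\<bar>a $ i\<bar> \<le> pnorm \<infinity> b + dist a b" for i
      using abs_component_le_pnorm_infinity[of b i] component_le_norm_cart[of "a - b" i]
      by (simp add: dist_norm)
    then show ?thesis by (simp add: pnorm_infinity_le_iff)
  qed
  have "1-lipschitz_on UNIV (pnorm \<infinity> :: real^'k \<Rightarrow> real)"
  proof (rule lipschitz_onI)
    show "dist (pnorm \<infinity> a) (pnorm \<infinity> b) \<le> 1 * dist a b" for a b :: "real^'k"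
      using le[of a b] le[of b a] by (simp add: dist_real_def dist_commute abs_le_iff)
  qed simp
  then show ?thesis unfolding 1 by (rule lipschitz_on_continuous_on)
next
  case (2 r)
  then show ?thesis
    by (simp add: pnorm_ereal)
      (intro continuous_on_powr' continuous_on_sum continuous_intros, auto simp: sum_nonneg)
qed

lemma sum_UNIV_option:
  "(\<Sum>i\<in>(UNIV::'a::finite option set). g i) = g None + (\<Sum>j\<in>UNIV. g (Some j))"
proof -
  have U: "(UNIV::'a option set) = insert None (range Some)" by (auto intro: option.exhaust)
  show ?thesis unfolding U by (subst sum.insert) (auto simp: sum.reindex)
qed

lemma Qmap_Some [simp]: "Qmap y $ Some j = y $ j"
  by (simp add: Qmap_def)

lemma Qmap_None [simp]: "Qmap y $ None = - (\<Sum>j\<in>UNIV. y $ j)"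
  by (simp add: Qmap_def)

lemma sum_Qmap_eq_0: "(\<Sum>i\<in>UNIV. Qmap y $ i) = 0"
  by (simp add: sum_UNIV_option)

lemma linear_Qmap: "linear Qmap"
  by (rule linearI) (auto simp: vec_eq_iff Qmap_def sum.distrib sum_distrib_left split: option.splits)

lemma card_UNIV_option_minus_Some: "card ((UNIV::'a::finite option set) - {Some j}) = CARD('a)"
  by (simp add: card_UNIV_option)

definition qnorm_value :: "ereal \<Rightarrow> nat \<Rightarrow> real" where
  "qnorm_value p m = (if p = \<infinity> then real m
     else (real m powr (real_of_ereal p - 1) + 1) powr (1 / real_of_ereal p))"

lemma qnorm_value_pos:
  assumes "m > 0"
  shows "qnorm_value p m > 0"
proof -
  have "0 < real m powr (real_of_ereal p - 1) + 1" by (simp add: add_nonneg_pos)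
  then show ?thesis using assms by (simp add: qnorm_value_def)
qed

lemma pnorm_Qmap_le:
  fixes y :: "real^'m"
  assumes p: "1 \<le> p"
  shows "pnorm p (Qmap y) \<le> qnorm_value p CARD('m) * pnorm p y"
  using p
proof (cases rule: ereal_ge1_cases)
  case 1
  define M where "M = pnorm \<infinity> y"
  have M: "\<bar>y $ j\<bar> \<le> M" for j unfolding M_def by (rule abs_component_le_pnorm_infinity)
  have "\<bar>Qmap y $ i\<bar> \<le> real CARD('m) * M" for i
  proof (cases i)
    case None
    have "\<bar>\<Sum>j\<in>UNIV. y $ j\<bar> \<le> (\<Sum>j\<in>UNIV. \<bar>y $ j\<bar>)" by (rule sum_abs)
    also have "\<dots> \<le> real CARD('m) * M" using M by (intro sum_bounded_above) auto
    finally show ?thesis using None by simp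
  next
    case (Some j)
    have "M \<le> real CARD('m) * M" using M[of j] by (simp add: mult_le_cancel_right1)
    then show ?thesis using Some M[of j] by simp
  qed
  then show ?thesis by (simp add: 1 qnorm_value_def pnorm_infinity_le_iff M_def)
next
  case (2 r)
  define Y where "Y = (\<Sum>j\<in>UNIV. \<bar>y $ j\<bar> powr r)"
  have "(\<Sum>i\<in>UNIV. \<bar>Qmap y $ i\<bar> powr r) = \<bar>\<Sum>j\<in>UNIV. y $ j\<bar> powr r + Y"
    by (simp add: sum_UNIV_option Y_def)
  also have "\<dots> \<le> real CARD('m) powr (r - 1) * Y + Y"
    unfolding Y_def using 2 by (intro add_right_mono abs_sum_powr_le) auto
  finally have "(\<Sum>i\<in>UNIV. \<bar>Qmap y $ i\<bar> powr r) \<le> (real CARD('m) powr (r - 1) + 1) * Y"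
    by (simp add: algebra_simps)
  then have "pnorm p (Qmap y) \<le> ((real CARD('m) powr (r - 1) + 1) * Y) powr (1 / r)"
    using 2 by (simp add: pnorm_ereal powr_mono2 sum_nonneg)
  also have "\<dots> = qnorm_value p CARD('m) * pnorm p y"
    using 2 by (simp add: pnorm_ereal qnorm_value_def powr_mult Y_def sum_nonneg)
  finally show ?thesis .
qed

lemma pnorm_Qmap_ones:
  assumes p: "1 \<le> p"
  shows "pnorm p (Qmap (\<chi> i. 1 :: real^'m)) = qnorm_value p CARD('m) * pnorm p (\<chi> i. 1 :: real^'m)"
  using p
proof (cases rule: ereal_ge1_cases)
  case 1
  have "pnorm \<infinity> (\<chi> i. 1 :: real^'m) = 1"
    by (simp add: pnorm_def)
  moreover have "pnorm \<infinity> (Qmap (\<chi> i. 1 :: real^'m)) = real CARD('m)"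
  proof (rule antisym)
    show "pnorm \<infinity> (Qmap (\<chi> i. 1 :: real^'m)) \<le> real CARD('m)"
      unfolding pnorm_infinity_le_iff
    proof
      fix i
      show "\<bar>Qmap (\<chi> i. 1 :: real^'m) $ i\<bar> \<le> real CARD('m)"
        by (cases i) (auto simp: Suc_le_eq)
    qed
    show "real CARD('m) \<le> pnorm \<infinity> (Qmap (\<chi> i. 1 :: real^'m))"
      using abs_component_le_pnorm_infinity[of "Qmap (\<chi> i. 1 :: real^'m)" None] by simp
  qed
  ultimately show ?thesis unfolding 1 qnorm_value_def by simp
next
  case (2 r)
  define m where "m = real CARD('m)"
  have m: "m > 0" by (simp add: m_def)
  have "m powr r + m = (m powr (r - 1) + 1) * m" using m by (simp add: powr_diff field_simps)
  then have "(m powr r + m) powr (1 / r) = (m powr (r - 1) + 1) powr (1 / r) * m powr (1 / r)"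
    using m by (simp add: powr_mult)
  then show ?thesis
    using 2 by (simp add: pnorm_ereal qnorm_value_def sum_UNIV_option m_def)
qed

lemma Qnorm_eq_qnorm_value:
  assumes p: "1 \<le> p"
  shows "Qnorm p TYPE('m::finite) = qnorm_value p CARD('m)"
  unfolding Qnorm_def
proof (rule cSup_eq_maximum)
  have ones: "(\<chi> i. 1 :: real^'m) \<noteq> 0" by (simp add: vec_eq_iff)
  have "pnorm p (Qmap (\<chi> i. 1 :: real^'m)) = qnorm_value p CARD('m) * pnorm p (\<chi> i. 1 :: real^'m)"
    by (rule pnorm_Qmap_ones[OF p])
  then have "qnorm_value p CARD('m) = pnorm p (Qmap (\<chi> i. 1 :: real^'m)) / pnorm p (\<chi> i. 1 :: real^'m)"
    using pnorm_pos[OF p ones] by simp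
  with ones show "qnorm_value p CARD('m) \<in> (\<lambda>y. pnorm p (Qmap y) / pnorm p y) ` {y :: real^'m. y \<noteq> 0}"
    by blast
next
  fix x
  assume "x \<in> (\<lambda>y. pnorm p (Qmap y) / pnorm p y) ` {y :: real^'m. y \<noteq> 0}"
  then obtain y :: "real^'m" where y: "y \<noteq> 0" and x: "x = pnorm p (Qmap y) / pnorm p y" by auto
  show "x \<le> qnorm_value p CARD('m)"
    unfolding x using pnorm_pos[OF p y] pnorm_Qmap_le[OF p, of y] by (simp add: divide_le_eq)
qed

lemma abs_le_if_le_Qmap:
  fixes u :: "real^'m" and w :: "real^('m option)"
  assumes le: "\<And>i. w $ i \<le> Qmap u $ i" and bound: "\<And>i. \<bar>w $ i\<bar> \<le> M"
  shows "\<bar>u $ j\<bar> \<le> real CARD('m) * M"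
proof -
  have "M \<le> real CARD('m) * M"
    using bound[of None] by (simp add: mult_le_cancel_right1)
  then have lower: "- (real CARD('m) * M) \<le> u $ j"
    using le[of "Some j"] bound[of "Some j"] by simp
  have "u $ j = - (\<Sum>i\<in>UNIV - {Some j}. Qmap u $ i)"
    using sum_Qmap_eq_0[of u] sum.remove[of UNIV "Some j" "\<lambda>i. Qmap u $ i"] by simp
  also have "\<dots> \<le> - (\<Sum>i\<in>UNIV - {Some j}. w $ i)"
    using le by (simp add: sum_mono)
  also have "\<dots> \<le> (\<Sum>i\<in>UNIV - {Some j}. \<bar>w $ i\<bar>)"
    by (metis abs_ge_minus_self order_trans sum_abs)
  also have "\<dots> \<le> real CARD('m) * M"
    using sum_bounded_above[of "UNIV - {Some j}" "\<lambda>i. \<bar>w $ i\<bar>" M] bound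
    by (simp add: card_UNIV_option_minus_Some)
  finally show ?thesis using lower by linarith
qed

lemma sum_abs_powr_le_if_le_Qmap:
  fixes u :: "real^'m" and w :: "real^('m option)" and r :: real
  assumes r: "r \<ge> 1" and le: "\<And>i. w $ i \<le> Qmap u $ i"
  shows "(\<Sum>j\<in>UNIV. \<bar>u $ j\<bar> powr r)
           \<le> (real CARD('m) powr (r - 1) + 1) * (\<Sum>i\<in>UNIV. \<bar>w $ i\<bar> powr r)"
proof -
  define d where "d i = Qmap u $ i - w $ i" for i
  define T where "T = (\<Sum>i\<in>UNIV. d i)"
  define W where "W = (\<Sum>i\<in>UNIV. \<bar>w $ i\<bar> powr r)"
  define B where "B = real CARD('m) powr (r - 1) * W"
  have d_nonneg: "0 \<le> d i" for i using le[of i] by (simp add: d_def)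
  have d_le_T: "d i \<le> T" for i unfolding T_def by (rule member_le_sum) (auto simp: d_nonneg)
  have far_end: "\<bar>w $ Some j + T\<bar> powr r \<le> B" for j
  proof -
    have "T = - (\<Sum>i\<in>UNIV. w $ i)"
      using sum_Qmap_eq_0[of u] by (simp add: T_def d_def sum_subtractf)
    then have "w $ Some j + T = - (\<Sum>i\<in>UNIV - {Some j}. w $ i)"
      using sum.remove[of UNIV "Some j" "\<lambda>i. w $ i"] by simp
    then have "\<bar>w $ Some j + T\<bar> powr r
        \<le> real (card ((UNIV :: 'm option set) - {Some j})) powr (r - 1) * (\<Sum>i\<in>UNIV - {Some j}. \<bar>w $ i\<bar> powr r)"
      using abs_sum_powr_le[OF r, of "UNIV - {Some j}" "\<lambda>i. w $ i"] option.distinct(1) by auto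
    also have "\<dots> \<le> B"
      unfolding B_def W_def card_UNIV_option_minus_Some by (intro mult_left_mono sum_mono2) auto
    finally show ?thesis .
  qed
  have "\<bar>u $ j\<bar> powr r \<le> \<bar>w $ Some j\<bar> powr r + d (Some j) / T * B" for j
  proof -
    have "\<bar>u $ j\<bar> powr r
        \<le> \<bar>w $ Some j\<bar> powr r + d (Some j) / T * (\<bar>w $ Some j + T\<bar> powr r - \<bar>w $ Some j\<bar> powr r)"
      using abs_add_powr_le_chord[OF r d_nonneg[of "Some j"] d_le_T[of "Some j"], of "w $ Some j"]
      by (simp add: d_def)
    also have "\<dots> \<le> \<bar>w $ Some j\<bar> powr r + d (Some j) / T * B"
      using far_end[of j] d_nonneg[of "Some j"] d_le_T[of "Some j"] powr_ge_zero[of "\<bar>w $ Some j\<bar>" r]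
      by (intro add_left_mono mult_left_mono) (auto simp del: powr_ge_zero)
    finally show ?thesis .
  qed
  then have "(\<Sum>j\<in>UNIV. \<bar>u $ j\<bar> powr r)
      \<le> (\<Sum>j\<in>UNIV. \<bar>w $ Some j\<bar> powr r + d (Some j) / T * B)"
    by (rule sum_mono)
  also have "\<dots> = (\<Sum>j\<in>UNIV. \<bar>w $ Some j\<bar> powr r) + (\<Sum>j\<in>UNIV. d (Some j)) / T * B"
    by (simp add: sum.distrib sum_distrib_right sum_divide_distrib)
  also have "\<dots> \<le> W + 1 * B"
  proof (intro add_mono mult_right_mono)
    show "(\<Sum>j\<in>UNIV. \<bar>w $ Some j\<bar> powr r) \<le> W"
      by (simp add: W_def sum_UNIV_option)
    have "T = d None + (\<Sum>j\<in>UNIV. d (Some j))" by (simp add: T_def sum_UNIV_option)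
    moreover have "0 \<le> (\<Sum>j\<in>UNIV. d (Some j))" by (simp add: sum_nonneg d_nonneg)
    ultimately show "(\<Sum>j\<in>UNIV. d (Some j)) / T \<le> 1"
      using d_nonneg[of None] by (auto simp: divide_le_eq_1)
    show "0 \<le> B" by (simp add: B_def W_def sum_nonneg)
  qed
  finally show ?thesis by (simp add: B_def W_def algebra_simps)
qed

lemma pnorm_le_if_le_Qmap:
  fixes u :: "real^'m" and w :: "real^('m option)"
  assumes p: "1 \<le> p" and le: "\<And>i. w $ i \<le> Qmap u $ i"
  shows "pnorm p u \<le> qnorm_value p CARD('m) * pnorm p w"
  using p
proof (cases rule: ereal_ge1_cases)
  case 1
  then show ?thesis
    using abs_le_if_le_Qmap[OF le abs_component_le_pnorm_infinity]
    by (simp add: qnorm_value_def pnorm_infinity_le_iff)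
next
  case (2 r)
  then have "pnorm p u \<le> ((real CARD('m) powr (r - 1) + 1) * (\<Sum>i\<in>UNIV. \<bar>w $ i\<bar> powr r)) powr (1 / r)"
    by (simp add: pnorm_ereal powr_mono2 sum_nonneg sum_abs_powr_le_if_le_Qmap[OF _ le])
  also have "\<dots> = qnorm_value p CARD('m) * pnorm p w"
    using 2 by (simp add: pnorm_ereal qnorm_value_def powr_mult sum_nonneg)
  finally show ?thesis .
qed

lemma hausdorff_p_le_imp_close:
  assumes "hausdorff_p p A B \<le> ereal \<epsilon>" and "a \<in> A" and "\<epsilon> < c"
  obtains b where "b \<in> B" and "pnorm p (a - b) < c"
proof -
  have "(INF b\<in>B. ereal (pnorm p (a - b))) \<le> ereal \<epsilon>"
    using assms(1,2) unfolding hausdorff_p_def by (meson SUP_upper max.bounded_iff order_trans)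
  also have "\<dots> < ereal c" using assms(3) by simp
  finally show ?thesis using that by (auto simp: INF_less_iff)
qed

lemma compact_attains_le_if_approx:
  fixes f :: "'a::topological_space \<Rightarrow> real"
  assumes "compact K" and "K \<noteq> {}" and "continuous_on K f"
    and approx: "\<And>e. e > 0 \<Longrightarrow> \<exists>z\<in>K. f z \<le> c + e"
  shows "\<exists>z\<in>K. f z \<le> c"
proof -
  obtain z0 where "z0 \<in> K" and min: "\<And>z. z \<in> K \<Longrightarrow> f z0 \<le> f z"
    using continuous_attains_inf[OF assms(1-3)] by blast
  moreover have "f z0 \<le> c"
  proof (rule field_le_epsilon)
    fix e :: real
    assume "e > 0"
    then show "f z0 \<le> c + e" using approx min by force
  qed
  ultimately show ?thesis by blast
qed

theorem mainTheorem17: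
  fixes S Sb :: "((real^'n) \<times> (real^'m)) set" and p :: ereal and \<epsilon> :: real
  assumes "convex S"
    and "MOCP_bounded S"
    and "1 \<le> p"
    and "hausdorff_eps_sol_MOCP p S \<epsilon> Sb"
  shows "finite_eps_sol_CP p S (Qnorm p TYPE('m) * \<epsilon>) Sb
         \<and> Qnorm p TYPE('m) = (if p = \<infinity> then real CARD('m)
              else (real CARD('m) powr (real_of_ereal p - 1) + 1) powr (1 / real_of_ereal p))"
proof -
  note p = assms(3)
  from assms(4) have fin: "finite Sb" and ne: "Sb \<noteq> {}" and sub: "Sb \<subseteq> S"
    and H: "hausdorff_p p (upper_image S)
              {u. \<exists>v \<in> convex hull (Pmap ` Sb). \<forall>i. v $ i \<le> u $ i} \<le> ereal \<epsilon>"
    by (auto simp: hausdorff_eps_sol_MOCP_def)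
  define C where "C = qnorm_value p CARD('m)"
  define K where "K = convex hull (snd ` Sb)"
  have C: "C > 0" unfolding C_def by (rule qnorm_value_pos) simp
  have "Pmap ` Sb = Qmap ` snd ` Sb" by (force simp: Pmap_def)
  then have hull: "convex hull (Pmap ` Sb) = Qmap ` K"
    unfolding K_def by (simp add: convex_hull_linear_image[OF linear_Qmap])
  have "\<exists>z\<in>K. pnorm p (y - z) \<le> C * \<epsilon>" if y: "y \<in> Yset S" for y
  proof (rule compact_attains_le_if_approx)
    show "compact K" "K \<noteq> {}"
      using fin ne by (auto simp: K_def intro: compact_convex_hull finite_imp_compact)
    show "continuous_on K (\<lambda>z. pnorm p (y - z))"
      by (intro continuous_on_compose2[OF continuous_on_pnorm[OF p]] continuous_intros) auto
    fix e :: real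
    assume "e > 0"
    obtain x where "(x, y) \<in> S" using y by (auto simp: Yset_def)
    then have "Qmap y \<in> upper_image S"
      unfolding upper_image_def by (intro closure_subset[THEN subsetD]) (force simp: Pmap_def)
    with H obtain b z where "z \<in> K" and "\<And>i. Qmap z $ i \<le> b $ i"
      and close: "pnorm p (Qmap y - b) < \<epsilon> + e / C"
      unfolding hull using C \<open>e > 0\<close> by (elim hausdorff_p_le_imp_close) auto
    then have "pnorm p (y - z) \<le> C * pnorm p (Qmap y - b)"
      unfolding C_def by (intro pnorm_le_if_le_Qmap[OF p])
        (simp add: linear_diff[OF linear_Qmap] diff_left_mono)
    also have "\<dots> \<le> C * (\<epsilon> + e / C)" using close C by (intro mult_left_mono) auto
    also have "\<dots> = C * \<epsilon> + e" using C by (simp add: field_simps)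
    finally show "\<exists>z\<in>K. pnorm p (y - z) \<le> C * \<epsilon> + e" using \<open>z \<in> K\<close> by blast
  qed
  moreover have "Qnorm p TYPE('m) = C" unfolding C_def by (rule Qnorm_eq_qnorm_value[OF p])
  ultimately show ?thesis
    using fin ne sub by (simp add: finite_eps_sol_CP_def K_def C_def qnorm_value_def)
qed

end
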